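(* Consider the planning problem $\mathcal{P}(\xi)$ defined in the context (with fixed data $A,B,C,M,N,K$, mode sets $\mathbb{X}_i,\mathbb{U}_i,\mathbb{W}_i,\mathbb{Z}_i,\mathbb{I}_i,\mathbb{X}^f_i$, obstacles $\mathbb{O}$). Suppose Assumptions (A1)–(A4) hold. Let $k_p\ge 0$ be a planning index and suppose $\mathcal{P}(x(k_pM))$ is feasible, with optimal solution $x_p^\star(k_p+j|k_p)$ ($j=0,\dots,N$), $u_p^\star(k_p+j|k_p)$ ($j=0,\dots,N-1$), $i^\star$. Assume the lower-layer controller, operated in mode $i^\star$ and tracking the reference generated from this solution, guarantees the contract $$x\big((k_p+1)M\big)-x_p^\star(k_p+1|k_p)\in\mathbb{Z}_{i^\star}.$$ Then the planning problem $\mathcal{P}\big(x((k_p+1)M)\big)$ is feasible.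
   Context: System: $x(k+1)=Ax(k)+Bu(k)+w(k)$, $y(k)=Cx(k)$, with $x(k)\in\mathbb{R}^n$, $u(k)\in\mathbb{R}^m$, $y(k)\in\mathbb{R}^p$, unknown disturbance $w(k)\in\mathbb{R}^n$, and closed convex constraint sets $\mathbb{X}\subseteq\mathbb{R}^n$, $\mathbb{U}\subseteq\mathbb{R}^m$. Obstacles: for $\ell=1,\dots,H$, $\mathbb{O}_\ell=\{y\in\mathbb{R}^p: E_\ell y<f_\ell\}$ (componentwise), $E_\ell\in\mathbb{R}^{q_\ell\times p}$, $f_\ell\in\mathbb{R}^{q_\ell}$, each the interior of a compact convex polytope; $\mathbb{O}=\bigcup_{\ell=1}^H\mathbb{O}_\ell$, so $y\notin\mathbb{O}$ iff for every $\ell$ there is a row index $a$ with $E_{\ell,a}y\ge f_{\ell,a}$. Notation: $\mathbb{X}\oplus\mathbb{Y}=\{x+y:x\in\mathbb{X},y\in\mathbb{Y}\}$, $\mathbb{X}\ominus\mathbb{Y}=\{x: \{x\}\oplus\mathbb{Y}\subseteq\mathbb{X}\}$, and for a matrix $G$, $G\mathbb{S}=\{Gs:s\in\mathbb{S}\}$. Modes: there are $N_w$ operating modes; for each $i\in\{1,\dots,N_w\}$, $\mathbb{X}_i\subseteq\mathbb{X}$ and $\mathbb{U}_i\subseteq\mathbb{U}$ are closed convex polytopes, $\mathbb{W}_i$ is a compact convex polytope, and $\mathbb{Z}_i\subseteq\mathbb{R}^n$ is a compact convex polytope (contract set); $K\in\mathbb{R}^{m\times n}$ is a fixed gain. (A1):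 if $x(k)\in\mathbb{X}_i$ and $u(k)\in\mathbb{U}_i$ then $w(k)\in\mathbb{W}_i$. Planning model: $M>1$ integer, $A_p=A^M$, $B_p=\sum_{i=0}^{M-1}A^iB$. (A2): $(A,B)$ and $(A_p,B_p)$ are controllable. (A3) Inter-sample sets $\mathbb{I}_i\subseteq\mathbb{R}^n\times\mathbb{R}^m$: if $(x_p,u_p)\in\mathbb{I}_i$ then for $\ell=1,\dots,M-1$: $A^\ell x_p+\sum_{m=0}^{\ell-1}A^mBu_p\in\mathbb{X}_i\ominus\mathbb{Z}_i$ and $C(A^\ell x_p+\sum_{m=0}^{\ell-1}A^mBu_p)\notin\mathbb{O}\oplus(-C)\mathbb{Z}_i$. (A4) Terminal sets $\mathbb{X}^f_i\subseteq\mathbb{R}^n$ and maps $\kappa^f_i:\mathbb{R}^n\to\mathbb{R}^m$: $x_p\in\mathbb{X}^f_i$ implies $A_px_p+B_p\kappa^f_i(x_p)\in\mathbb{X}^f_i$, $x_p\in\mathbb{X}_i\ominus\mathbb{Z}_i$, $\kappa^f_i(x_p)\in\mathbb{U}_i\ominus K\mathbb{Z}_i$, $(x_p,\kappa^f_i(x_p))\in\mathbb{I}_i$, and $Cx_p\notin\mathbb{O}\oplus(-C)\mathbb{Z}_i$. Planning problem $\mathcal{P}(\xi)$ at planning index $k_p$ (time $k_pM$), with $\xi=x(k_pM)$, horizon $N\ge1$, weights $\alpha_x,\alpha_u\ge0$, goal $x_{\text{goal}}$: minimize over $x_p(k_p+j|k_p)$ ($j=0,\dots,N$), $u_p(k_p+j|k_p)$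 ($j=0,\dots,N-1$) and $i$ the cost $\|x_{\text{goal}}-x_p(k_p+N|k_p)\|_\infty+\sum_{j=0}^{N-1}\big(\alpha_x\|x_p(k_p+j|k_p)\|_\infty+\alpha_u\|u_p(k_p+j|k_p)\|_\infty\big)$ subject to: $i\in\{1,\dots,N_w\}$; $\xi-x_p(k_p|k_p)\in\mathbb{Z}_i$; and for all $j\in\{0,\dots,N-1\}$: $x_p(k_p+j+1|k_p)=A_px_p(k_p+j|k_p)+B_pu_p(k_p+j|k_p)$, $x_p(k_p+j|k_p)\in\mathbb{X}_i\ominus\mathbb{Z}_i$, $u_p(k_p+j|k_p)\in\mathbb{U}_i\ominus K\mathbb{Z}_i$, $Cx_p(k_p+j|k_p)\notin\mathbb{O}\oplus(-C)\mathbb{Z}_i$, $(x_p(k_p+j|k_p),u_p(k_p+j|k_p))\in\mathbb{I}_i$; and $x_p(k_p+N|k_p)\in\mathbb{X}^f_i$. *)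

theory Defs
  imports "HOL-Analysis.Analysis"
begin

fun matpow :: "real^'n^'n \<Rightarrow> nat \<Rightarrow> real^'n^'n" where
  "matpow A 0 = mat 1"
| "matpow A (Suc k) = A ** matpow A k"

definition msum :: "('a::ab_group_add) set \<Rightarrow> 'a set \<Rightarrow> 'a set" where
  "msum X Y = {x + y | x y. x \<in> X \<and> y \<in> Y}"

definition pdiff :: "('a::ab_group_add) set \<Rightarrow> 'a set \<Rightarrow> 'a set" where
  "pdiff X Y = {x. msum {x} Y \<subseteq> X}"

definition matimg :: "real^'n^'m \<Rightarrow> (real^'n) set \<Rightarrow> (real^'m) set" where
  "matimg G S = {G *v s | s. s \<in> S}"

text \<open>Controllability of (A,B): the controllability matrix [B AB ... A^(n-1)B] has rank n,
  i.e. its column space (spanned by the vectors A^k B u, k < n) is all of R^n.\<close>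
definition controllable :: "real^'n^'n \<Rightarrow> real^'m^'n \<Rightarrow> bool" where
  "controllable A B \<longleftrightarrow>
     span (\<Union>k<CARD('n). range (\<lambda>u. matpow A k *v (B *v u))) = UNIV"

definition Ap :: "real^'n^'n \<Rightarrow> nat \<Rightarrow> real^'n^'n" where
  "Ap A M = matpow A M"

definition Bp :: "real^'n^'n \<Rightarrow> real^'m^'n \<Rightarrow> nat \<Rightarrow> real^'m^'n" where
  "Bp A B M = (\<Sum>i<M. matpow A i ** B)"

text \<open>Obstacles: O_l = {y. E_l y < f_l componentwise}; row a of E_l is E l a, a < q l.\<close>
definition obst :: "(nat \<Rightarrow> nat) \<Rightarrow> (nat \<Rightarrow> nat \<Rightarrow> real^'p) \<Rightarrow> (nat \<Rightarrow> nat \<Rightarrow> real) \<Rightarrow> nat \<Rightarrow> (real^'p) set" where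
  "obst q E f l = {y. \<forall>a<q l. E l a \<bullet> y < f l a}"

definition obstacles :: "nat \<Rightarrow> (nat \<Rightarrow> nat) \<Rightarrow> (nat \<Rightarrow> nat \<Rightarrow> real^'p) \<Rightarrow> (nat \<Rightarrow> nat \<Rightarrow> real) \<Rightarrow> (real^'p) set" where
  "obstacles H q E f = (\<Union>l\<in>{1..H}. obst q E f l)"

definition intersample :: "real^'n^'n \<Rightarrow> real^'m^'n \<Rightarrow> nat \<Rightarrow> real^'n \<Rightarrow> real^'m \<Rightarrow> real^'n" where
  "intersample A B l xp up = matpow A l *v xp + (\<Sum>m<l. matpow A m *v (B *v up))"

text \<open>Feasibility of a candidate (xs, us, i) for the planning problem P(xi).
  xs j stands for x_p(k_p+j|k_p) (j = 0..N), us j for u_p(k_p+j|k_p) (j = 0..N-1).\<close>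
definition plan_feasible ::
  "real^'n^'n \<Rightarrow> real^'m^'n \<Rightarrow> real^'n^'p \<Rightarrow> real^'n^'m \<Rightarrow> nat \<Rightarrow> nat \<Rightarrow> nat \<Rightarrow>
   (nat \<Rightarrow> (real^'n) set) \<Rightarrow> (nat \<Rightarrow> (real^'m) set) \<Rightarrow> (nat \<Rightarrow> (real^'n) set) \<Rightarrow>
   (nat \<Rightarrow> ((real^'n) \<times> (real^'m)) set) \<Rightarrow> (nat \<Rightarrow> (real^'n) set) \<Rightarrow> (real^'p) set \<Rightarrow>
   real^'n \<Rightarrow> (nat \<Rightarrow> real^'n) \<Rightarrow> (nat \<Rightarrow> real^'m) \<Rightarrow> nat \<Rightarrow> bool" where
  "plan_feasible A B C K M N Nw Xs Us Zs Is Xf Obs xi xs us i \<longleftrightarrow>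
     i \<in> {1..Nw} \<and>
     xi - xs 0 \<in> Zs i \<and>
     (\<forall>j<N.
        xs (Suc j) = Ap A M *v xs j + Bp A B M *v us j \<and>
        xs j \<in> pdiff (Xs i) (Zs i) \<and>
        us j \<in> pdiff (Us i) (matimg K (Zs i)) \<and>
        C *v xs j \<notin> msum Obs (matimg (- C) (Zs i)) \<and>
        (xs j, us j) \<in> Is i) \<and>
     xs N \<in> Xf i"

definition plan_cost ::
  "nat \<Rightarrow> real \<Rightarrow> real \<Rightarrow> real^'n \<Rightarrow> (nat \<Rightarrow> real^'n) \<Rightarrow> (nat \<Rightarrow> real^'m) \<Rightarrow> real" where
  "plan_cost N ax au xgoal xs us =
     infnorm (xgoal - xs N) + (\<Sum>j<N. ax * infnorm (xs j) + au * infnorm (us j))"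

definition plan_solvable ::
  "real^'n^'n \<Rightarrow> real^'m^'n \<Rightarrow> real^'n^'p \<Rightarrow> real^'n^'m \<Rightarrow> nat \<Rightarrow> nat \<Rightarrow> nat \<Rightarrow>
   (nat \<Rightarrow> (real^'n) set) \<Rightarrow> (nat \<Rightarrow> (real^'m) set) \<Rightarrow> (nat \<Rightarrow> (real^'n) set) \<Rightarrow>
   (nat \<Rightarrow> ((real^'n) \<times> (real^'m)) set) \<Rightarrow> (nat \<Rightarrow> (real^'n) set) \<Rightarrow> (real^'p) set \<Rightarrow>
   real^'n \<Rightarrow> bool" where
  "plan_solvable A B C K M N Nw Xs Us Zs Is Xf Obs xi \<longleftrightarrow>
     (\<exists>xs us i. plan_feasible A B C K M N Nw Xs Us Zs Is Xf Obs xi xs us i)"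

end

theory Submission
  imports Defs
begin

text \<open>Recursive feasibility by the usual shift argument: the tail of the previous optimal plan,
  extended by one step of the terminal controller, is feasible for the next planning problem.
  The contract supplies the initial-state constraint, the tail inherits all stage constraints,
  and the terminal invariance of (A4) covers the appended stage and the new terminal state.\<close>

definition plan_shift :: "nat \<Rightarrow> 'a \<Rightarrow> (nat \<Rightarrow> 'a) \<Rightarrow> nat \<Rightarrow> 'a" where
  "plan_shift n z s j = (if j < n then s (Suc j) else z)"

lemma plan_feasible_shift:
  assumes feas: "plan_feasible A B C K M N Nw Xs Us Zs Is Xf Obs xi xs us i"
    and N_ge: "N \<ge> 1"
    and init: "xi' - xs 1 \<in> Zs i"
    and term_next: "Ap A M *v xs N + Bp A B M *v uf \<in> Xf i"
    and term_state: "xs N \<in> pdiff (Xs i) (Zs i)"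
    and term_input: "uf \<in> pdiff (Us i) (matimg K (Zs i))"
    and term_obst: "C *v xs N \<notin> msum Obs (matimg (- C) (Zs i))"
    and term_inter: "(xs N, uf) \<in> Is i"
  shows "plan_feasible A B C K M N Nw Xs Us Zs Is Xf Obs xi'
           (plan_shift N (Ap A M *v xs N + Bp A B M *v uf) xs) (plan_shift (N - 1) uf us) i"
    (is "plan_feasible _ _ _ _ _ _ _ _ _ _ _ _ _ _ ?xs ?us _")
proof -
  from feas have stage: "\<And>j. j < N \<Longrightarrow>
        xs (Suc j) = Ap A M *v xs j + Bp A B M *v us j \<and>
        xs j \<in> pdiff (Xs i) (Zs i) \<and>
        us j \<in> pdiff (Us i) (matimg K (Zs i)) \<and>
        C *v xs j \<notin> msum Obs (matimg (- C) (Zs i)) \<and>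
        (xs j, us j) \<in> Is i"
    by (simp add: plan_feasible_def)
  have shifted_stage: "?xs (Suc j) = Ap A M *v ?xs j + Bp A B M *v ?us j \<and>
        ?xs j \<in> pdiff (Xs i) (Zs i) \<and>
        ?us j \<in> pdiff (Us i) (matimg K (Zs i)) \<and>
        C *v ?xs j \<notin> msum Obs (matimg (- C) (Zs i)) \<and>
        (?xs j, ?us j) \<in> Is i" if "j < N" for j
  proof (cases "Suc j < N")
    case True
    then have "j < N - 1" by simp
    then show ?thesis using True stage[of "Suc j"] by (simp add: plan_shift_def)
  next
    case False
    with \<open>j < N\<close> have "Suc j = N" by simp
    then show ?thesis using term_state term_input term_obst term_inter
      by (auto simp: plan_shift_def)
  qed
  show ?thesis
    using feas N_ge init term_next shifted_stage by (simp add: plan_feasible_def plan_shift_def)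
qed

theorem proposition1:
  fixes A :: "real^'n^'n" and B :: "real^'m^'n" and C :: "real^'n^'p"
    and K :: "real^'n^'m"
    and M N Nw H :: nat
    and X :: "(real^'n) set" and U :: "(real^'m) set"
    and Xs :: "nat \<Rightarrow> (real^'n) set" and Us :: "nat \<Rightarrow> (real^'m) set"
    and Ws :: "nat \<Rightarrow> (real^'n) set" and Zs :: "nat \<Rightarrow> (real^'n) set"
    and Is :: "nat \<Rightarrow> ((real^'n) \<times> (real^'m)) set"
    and Xf :: "nat \<Rightarrow> (real^'n) set" and kf :: "nat \<Rightarrow> real^'n \<Rightarrow> real^'m"
    and q :: "nat \<Rightarrow> nat" and E :: "nat \<Rightarrow> nat \<Rightarrow> real^'p" and f :: "nat \<Rightarrow> nat \<Rightarrow> real"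
    and ax au :: real and xgoal :: "real^'n"
    and x :: "nat \<Rightarrow> real^'n" and u :: "nat \<Rightarrow> real^'m" and w :: "nat \<Rightarrow> real^'n"
    and kp :: nat
    and xs_opt :: "nat \<Rightarrow> real^'n" and us_opt :: "nat \<Rightarrow> real^'m" and i_opt :: nat
  defines "Obs \<equiv> obstacles H q E f"
  assumes M_gt: "M > 1" and N_ge: "N \<ge> 1"
    and ax_nn: "ax \<ge> 0" and au_nn: "au \<ge> 0"
    and X_cc: "closed X \<and> convex X" and U_cc: "closed U \<and> convex U"
    and modes: "\<forall>i\<in>{1..Nw}. polyhedron (Xs i) \<and> Xs i \<subseteq> X \<and> polyhedron (Us i) \<and> Us i \<subseteq> U
                  \<and> polytope (Ws i) \<and> polytope (Zs i)"
    and obst_poly: "\<forall>l\<in>{1..H}. \<exists>P. polytope P \<and> obst q E f l = interior P"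
    and dyn: "\<forall>k. x (Suc k) = A *v x k + B *v u k + w k"
    and A1: "\<forall>k. \<forall>i\<in>{1..Nw}. x k \<in> Xs i \<and> u k \<in> Us i \<longrightarrow> w k \<in> Ws i"
    and A2: "controllable A B \<and> controllable (Ap A M) (Bp A B M)"
    and A3: "\<forall>i\<in>{1..Nw}. \<forall>xp up. (xp, up) \<in> Is i \<longrightarrow>
               (\<forall>l\<in>{1..M-1}. intersample A B l xp up \<in> pdiff (Xs i) (Zs i) \<and>
                   C *v intersample A B l xp up \<notin> msum Obs (matimg (- C) (Zs i)))"
    and A4: "\<forall>i\<in>{1..Nw}. \<forall>xp\<in>Xf i.
               Ap A M *v xp + Bp A B M *v kf i xp \<in> Xf i \<and>
               xp \<in> pdiff (Xs i) (Zs i) \<and>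
               kf i xp \<in> pdiff (Us i) (matimg K (Zs i)) \<and>
               (xp, kf i xp) \<in> Is i \<and>
               C *v xp \<notin> msum Obs (matimg (- C) (Zs i))"
    and opt_feas: "plan_feasible A B C K M N Nw Xs Us Zs Is Xf Obs (x (kp * M)) xs_opt us_opt i_opt"
    and opt_min: "\<forall>xs us i. plan_feasible A B C K M N Nw Xs Us Zs Is Xf Obs (x (kp * M)) xs us i \<longrightarrow>
                    plan_cost N ax au xgoal xs_opt us_opt \<le> plan_cost N ax au xgoal xs us"
    and contract: "x ((kp + 1) * M) - xs_opt 1 \<in> Zs i_opt"
  shows "plan_solvable A B C K M N Nw Xs Us Zs Is Xf Obs (x ((kp + 1) * M))"
proof -
  from opt_feas have mode: "i_opt \<in> {1..Nw}" and terminal: "xs_opt N \<in> Xf i_opt"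
    by (simp_all add: plan_feasible_def)
  let ?uf = "kf i_opt (xs_opt N)"
  have "plan_feasible A B C K M N Nw Xs Us Zs Is Xf Obs (x ((kp + 1) * M))
          (plan_shift N (Ap A M *v xs_opt N + Bp A B M *v ?uf) xs_opt)
          (plan_shift (N - 1) ?uf us_opt) i_opt"
    using A4 mode terminal by (intro plan_feasible_shift[OF opt_feas N_ge contract]) auto
  then show ?thesis
    unfolding plan_solvable_def by blast
qed

end
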